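(* Let $\lambda>0$ and let $(\alpha_n)_{n\geq 0}$ be a sequence with $0<\alpha_n\leq 1$. Consider the system of difference-differential equations (governing the state probabilities of the state dependent time fractional Poisson process-I) $$\partial_t^{\alpha_n} p^{\alpha_n}(n,t)=-\lambda\big(p^{\alpha_n}(n,t)-p^{\alpha_{n-1}}(n-1,t)\big),\qquad n\geq 0,\ t\geq 0,$$ with $p^{\alpha_{-1}}(-1,t)=0$ for $t\geq0$, and initial conditions $p^{\alpha_0}(0,0)=1$ and $p^{\alpha_n}(n,0)=0$ for $n\geq 1$. The solution of this system is given by $$p^{\alpha_n}(n,t)=(-1)^n\sum_{k=n}^{\infty}(-\lambda)^k\sum_{\Theta^k_n}\frac{t^{\sum_{j=0}^nk_j\alpha_j}}{\Gamma\big(1+\sum_{j=0}^nk_j\alpha_j\big)},\qquad n\geq0,$$ where $\Theta^k_n=\{(k_0,k_1,\ldots,k_n):\ \sum_{j=0}^nk_j=k,\ k_0\in\mathbb{N}_0,\ k_j\in\mathbb{N}_0\setminus\{0\} \text{ for } 1\leq j\leq n\}$.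
   Context: $\mathbb{N}_0$ denotes the set of nonnegative integers. For $0<\alpha<1$, $\partial_t^{\alpha}$ denotes the Caputo fractional derivative $\partial_t^{\alpha}f(t)=\frac{1}{\Gamma(1-\alpha)}\int_0^t (t-s)^{-\alpha}f'(s)\,\mathrm{d}s$, and for $\alpha=1$, $\partial_t^{1}f(t)=f'(t)$. *)

theory Defs
  imports "HOL-Analysis.Analysis"
begin

text \<open>Power t^x for t \<ge> 0 with the convention t^0 = 1 (also at t = 0);
  Isabelle's powr has 0 powr 0 = 0, which would be wrong for the k = 0 term.\<close>
definition tpow :: "real \<Rightarrow> real \<Rightarrow> real" where
  "tpow t x = (if x = 0 then 1 else t powr x)"

definition caputo :: "real \<Rightarrow> (real \<Rightarrow> real) \<Rightarrow> real \<Rightarrow> real" where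
  "caputo a f t = (if a = 1 then deriv f t
     else (1 / Gamma (1 - a)) * integral {0..t} (\<lambda>s. (t - s) powr (- a) * deriv f s))"

definition caputo_defined :: "real \<Rightarrow> (real \<Rightarrow> real) \<Rightarrow> real \<Rightarrow> bool" where
  "caputo_defined a f t = (if a = 1 then f differentiable (at t)
     else (\<forall>s\<in>{0<..<t}. f differentiable (at s)) \<and>
          (\<lambda>s. (t - s) powr (- a) * deriv f s) integrable_on {0..t})"

definition Theta :: "nat \<Rightarrow> nat \<Rightarrow> (nat \<Rightarrow> nat) set" where
  "Theta k n = {ks. (\<forall>j>n. ks j = 0) \<and> (\<Sum>j\<le>n. ks j) = k \<and> (\<forall>j\<in>{1..n}. ks j \<ge> 1)}"

definition sdfpp_term :: "real \<Rightarrow> (nat \<Rightarrow> real) \<Rightarrow> nat \<Rightarrow> real \<Rightarrow> nat \<Rightarrow> real" where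
  "sdfpp_term lam \<alpha> n t k = (- lam) ^ k *
     (\<Sum>ks\<in>Theta k n. tpow t (\<Sum>j\<le>n. real (ks j) * \<alpha> j) / Gamma (1 + (\<Sum>j\<le>n. real (ks j) * \<alpha> j)))"

text \<open>Sum over k \<ge> n; terms with k < n vanish since Theta k n is then empty.\<close>
definition sdfpp :: "real \<Rightarrow> (nat \<Rightarrow> real) \<Rightarrow> nat \<Rightarrow> real \<Rightarrow> real" where
  "sdfpp lam \<alpha> n t = (-1) ^ n * (\<Sum>k. sdfpp_term lam \<alpha> n t (k + n))"

end

theory Submission
  imports Defs
begin

text \<open>Each tuple \<open>ks \<in> Theta k n\<close> contributes a power \<open>t^b / Gamma (1 + b)\<close> with exponent
  \<open>b = \<Sum>j\<le>n. ks j * \<alpha> j\<close>, so \<open>b \<ge> c * k\<close> for \<open>c = min {\<alpha> 0, ..., \<alpha> n}\<close>.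
  Its Caputo derivative of order \<open>a\<close> is \<open>t^(b - a) / Gamma (1 + b - a)\<close> by a Beta
  integral. For \<open>a = \<alpha> n\<close>, lowering the last entry of a tuple in \<open>Theta (k + 1) n\<close> by one
  lowers \<open>b\<close> by exactly \<open>\<alpha> n\<close> and maps \<open>Theta (k + 1) n\<close> bijectively onto
  \<open>Theta k n \<union> Theta k (n - 1)\<close>; termwise, this is the difference-differential equation.
  Differentiating and integrating termwise is justified by geometric majorants:
  \<open>Gamma (1 + b) \<ge> R^b / exp (R + 1)\<close> bounds a term on \<open>[0, T]\<close> by
  \<open>exp (R + 1) * (T / R)^(c * k)\<close>, and for large \<open>R\<close> this beats both \<open>lam^k\<close> and the
  polynomial growth of \<open>card (Theta k n)\<close>.\<close>

section \<open>The index sets\<close>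

lemma Theta_iff:
  "ks \<in> Theta k n \<longleftrightarrow> (\<forall>j>n. ks j = 0) \<and> (\<Sum>j<n. ks j) + ks n = k \<and>
     (\<forall>j\<in>{1..<n}. 1 \<le> ks j) \<and> (1 \<le> n \<longrightarrow> 1 \<le> ks n)"
  unfolding Theta_def lessThan_Suc_atMost[symmetric] by (auto simp: atLeastLessThanSuc)

lemma inj_on_restrict_Theta: "inj_on (\<lambda>ks. restrict ks {..n}) (Theta k n)"
proof (rule inj_onI, rule ext)
  fix ks ks' j assume "ks \<in> Theta k n" "ks' \<in> Theta k n" "restrict ks {..n} = restrict ks' {..n}"
  then show "ks j = ks' j"
    by (cases "j \<le> n") (auto simp: Theta_def dest: fun_cong[of _ _ j])
qed

lemma restrict_Theta_subset: "(\<lambda>ks. restrict ks {..n}) ` Theta k n \<subseteq> PiE {..n} (\<lambda>_. {..k})"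
proof -
  have "ks j \<le> k" if "ks \<in> Theta k n" "j \<le> n" for ks j
    using that member_le_sum[of j "{..n}" ks] by (simp add: Theta_def)
  then show ?thesis by (intro image_subsetI) (simp add: restrict_PiE_iff)
qed

lemma finite_Theta: "finite (Theta k n)"
  using inj_on_restrict_Theta restrict_Theta_subset by (rule inj_on_finite) (simp add: finite_PiE)

lemma card_Theta_le: "card (Theta k n) \<le> (k + 1) ^ (n + 1)"
proof -
  have "card (Theta k n) \<le> card (PiE {..n} (\<lambda>_. {..k}))"
    using inj_on_restrict_Theta restrict_Theta_subset
    by (rule card_inj_on_le) (simp add: finite_PiE)
  then show ?thesis by (simp add: card_PiE)
qed

lemma mem_Theta_imp_le: "ks \<in> Theta k n \<Longrightarrow> n \<le> k"
proof -
  assume ks: "ks \<in> Theta k n"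
  have "n = (\<Sum>j\<in>{1..n}. 1::nat)" by simp
  also have "\<dots> \<le> (\<Sum>j\<in>{1..n}. ks j)" using ks by (intro sum_mono) (auto simp: Theta_def)
  also have "\<dots> \<le> (\<Sum>j\<le>n. ks j)" by (intro sum_mono2) auto
  finally show "n \<le> k" using ks by (simp add: Theta_def)
qed

lemma Theta_eq_empty: "k < n \<Longrightarrow> Theta k n = {}"
  using mem_Theta_imp_le by force

lemma Theta_0_0: "Theta 0 0 = {\<lambda>_. 0}"
  unfolding Theta_def by (auto simp: fun_eq_iff) (metis neq0_conv)

lemma Theta_Suc_last_ge_1: "ks \<in> Theta (Suc k) n \<Longrightarrow> 1 \<le> ks n"
  by (cases n) (auto simp: Theta_iff)

lemma bij_betw_Theta_Suc:
  "bij_betw (\<lambda>ks. ks(n := ks n - 1)) (Theta (Suc k) n)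
     (Theta k n \<union> (if n = 0 then {} else Theta k (n - 1)))"
  (is "bij_betw ?dec ?A ?B")
proof (rule bij_betw_byWitness[where f' = "\<lambda>ks. ks(n := ks n + 1)"])
  show "\<forall>ks\<in>?A. (?dec ks)(n := ?dec ks n + 1) = ks"
    by (auto simp: fun_eq_iff dest!: Theta_Suc_last_ge_1)
  show "\<forall>ks\<in>?B. ?dec (ks(n := ks n + 1)) = ks"
    by auto
  show "?dec ` ?A \<subseteq> ?B"
  proof (intro image_subsetI)
    fix ks assume ks: "ks \<in> ?A"
    show "?dec ks \<in> ?B"
    proof (cases n)
      case 0
      then show ?thesis using ks by (simp add: Theta_iff)
    next
      case (Suc m)
      then show ?thesis using ks by (cases "ks n = 1") (auto simp: Theta_iff)
    qed
  qed
  show "(\<lambda>ks. ks(n := ks n + 1)) ` ?B \<subseteq> ?A"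
    by (cases n) (auto simp: Theta_iff less_Suc_eq)
qed

definition exponent :: "(nat \<Rightarrow> real) \<Rightarrow> nat \<Rightarrow> (nat \<Rightarrow> nat) \<Rightarrow> real" where
  "exponent \<alpha> n ks = (\<Sum>j\<le>n. real (ks j) * \<alpha> j)"

lemma exponent_fun_upd:
  "exponent \<alpha> n (ks(n := v)) = exponent \<alpha> n ks + (real v - real (ks n)) * \<alpha> n"
proof -
  have "(\<Sum>j<n. real ((ks(n := v)) j) * \<alpha> j) = (\<Sum>j<n. real (ks j) * \<alpha> j)"
    by (intro sum.cong) auto
  then show ?thesis
    unfolding exponent_def lessThan_Suc_atMost[symmetric] by (simp add: algebra_simps)
qed

lemma exponent_Suc: "ks \<in> Theta k n \<Longrightarrow> exponent \<alpha> (Suc n) ks = exponent \<alpha> n ks"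
  by (simp add: exponent_def Theta_def)

lemma exponent_Theta_0: "ks \<in> Theta 0 n \<Longrightarrow> exponent \<alpha> n ks = 0"
  by (simp add: exponent_def Theta_def)

lemma exponent_nonneg: "(\<And>j. 0 \<le> \<alpha> j) \<Longrightarrow> 0 \<le> exponent \<alpha> n ks"
  unfolding exponent_def by (intro sum_nonneg mult_nonneg_nonneg) auto

lemma exponent_le:
  assumes "\<And>j. \<alpha> j \<le> 1" and "ks \<in> Theta k n"
  shows "exponent \<alpha> n ks \<le> k"
proof -
  have "exponent \<alpha> n ks \<le> (\<Sum>j\<le>n. real (ks j))"
    unfolding exponent_def using assms(1) by (intro sum_mono) (simp add: mult_left_le)
  also have "\<dots> = k" using assms(2) by (simp add: Theta_def flip: of_nat_sum)
  finally show ?thesis .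
qed

lemma exponent_ge:
  assumes "\<And>j. j \<le> n \<Longrightarrow> c \<le> \<alpha> j" and "ks \<in> Theta k n"
  shows "c * k \<le> exponent \<alpha> n ks"
proof -
  have "real k = (\<Sum>j\<le>n. real (ks j))"
    using assms(2) by (simp add: Theta_def flip: of_nat_sum)
  then have "c * k = (\<Sum>j\<le>n. c * real (ks j))"
    by (simp add: sum_distrib_left)
  also have "\<dots> \<le> exponent \<alpha> n ks"
    unfolding exponent_def using assms(1)
    by (intro sum_mono) (simp add: mult.commute[of c] mult_left_mono)
  finally show ?thesis .
qed

lemma alpha_le_exponent:
  assumes "\<And>j. 0 \<le> \<alpha> j" and "ks \<in> Theta (Suc k) n"
  shows "\<alpha> n \<le> exponent \<alpha> n ks"
proof -
  have "\<alpha> n \<le> real (ks n) * \<alpha> n"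
    using Theta_Suc_last_ge_1[OF assms(2)] assms(1)[of n] by (simp add: mult_le_cancel_right1)
  also have "\<dots> \<le> exponent \<alpha> n ks"
    unfolding exponent_def using assms(1) by (intro member_le_sum mult_nonneg_nonneg) auto
  finally show ?thesis .
qed

lemma exponent_pos:
  assumes "\<And>j. 0 < \<alpha> j" and "ks \<in> Theta (Suc k) n"
  shows "0 < exponent \<alpha> n ks"
  using alpha_le_exponent[of \<alpha> ks k n] assms by (meson less_imp_le less_le_trans)

section \<open>Powers and their Caputo derivatives\<close>

lemma Gamma_ge_powr_div_exp:
  fixes x R :: real
  assumes "0 \<le> x" and "0 < R"
  shows "R powr x / exp (R + 1) \<le> Gamma (1 + x)"
proof -
  define f where "f t = t powr x / exp t" for t :: real
  have f_integral: "(f has_integral Gamma (1 + x)) {0..}"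
    using Gamma_integral_real[of "1 + x"] assms unfolding f_def[abs_def] by simp
  have f_integrable: "f integrable_on {R..R+1}"
    unfolding f_def using assms by (intro integrable_continuous_interval continuous_intros) auto
  have "R powr x / exp (R + 1) = integral {R..R+1} (\<lambda>_. R powr x / exp (R + 1))"
    by simp
  also have "\<dots> \<le> integral {R..R+1} f"
    using assms by (intro integral_le f_integrable) (auto simp: f_def intro!: frac_le powr_mono2)
  also have "\<dots> \<le> integral {0..} f"
    using f_integral f_integrable assms by (intro integral_subset_le) (auto simp: f_def)
  also have "\<dots> = Gamma (1 + x)"
    using f_integral by (rule integral_unique)
  finally show ?thesis .
qed

definition pow_gamma :: "real \<Rightarrow> real \<Rightarrow> real" where
  "pow_gamma b t = tpow t b / Gamma (1 + b)"

text \<open>For \<open>a = 1\<close> this is the derivative of \<^term>\<open>pow_gamma b\<close>, for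
  \<open>0 < a < 1\<close> its Caputo derivative of order \<open>a\<close>; the derivative of the constant
  \<open>pow_gamma 0 = 1\<close> is \<open>0\<close>.\<close>
definition caputo_pow_gamma :: "real \<Rightarrow> real \<Rightarrow> real \<Rightarrow> real" where
  "caputo_pow_gamma a b t = (if b = 0 then 0 else t powr (b - a) / Gamma (1 + b - a))"

lemma pow_gamma_nonneg: "0 \<le> b \<Longrightarrow> 0 \<le> pow_gamma b t"
  unfolding pow_gamma_def tpow_def by auto

lemma pow_gamma_0 [simp]: "pow_gamma 0 t = 1"
  by (simp add: pow_gamma_def tpow_def)

lemma pow_gamma_at_0: "b \<noteq> 0 \<Longrightarrow> pow_gamma b 0 = 0"
  by (simp add: pow_gamma_def tpow_def)

lemma pow_gamma_le:
  assumes "0 \<le> t" "t \<le> T" "0 < T" "T \<le> R" "0 \<le> b"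
  shows "pow_gamma b t \<le> exp (R + 1) * (T / R) powr b"
proof (cases "b = 0")
  case False
  have "pow_gamma b t = t powr b / Gamma (1 + b)"
    using False by (simp add: pow_gamma_def tpow_def)
  also have "\<dots> \<le> T powr b / (R powr b / exp (R + 1))"
    using assms by (intro frac_le powr_mono2 Gamma_ge_powr_div_exp) auto
  also have "\<dots> = exp (R + 1) * (T / R) powr b"
    using assms by (simp add: powr_divide)
  finally show ?thesis .
qed (use assms in simp)

lemma caputo_pow_gamma_nonneg: "0 \<le> b \<Longrightarrow> a \<le> 1 \<Longrightarrow> 0 \<le> caputo_pow_gamma a b t"
  unfolding caputo_pow_gamma_def by (auto intro!: divide_nonneg_pos)

lemma caputo_pow_gamma_at_0 [simp]: "caputo_pow_gamma a b 0 = 0"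
  by (simp add: caputo_pow_gamma_def)

lemma caputo_pow_gamma_eq_pow_gamma:
  "0 < t \<Longrightarrow> b \<noteq> 0 \<Longrightarrow> caputo_pow_gamma a b t = pow_gamma (b - a) t"
  by (simp add: caputo_pow_gamma_def pow_gamma_def tpow_def add_diff_eq)

lemma caputo_pow_gamma_1:
  assumes "0 < s" "0 < b"
  shows "caputo_pow_gamma 1 b s = b / s * pow_gamma b s"
proof -
  have "Gamma (1 + b) = b * Gamma b"
    using Gamma_plus1[of b] assms by (simp add: add.commute nonpos_Ints_def)
  then show ?thesis
    using assms by (simp add: caputo_pow_gamma_def pow_gamma_def tpow_def powr_diff field_simps)
qed

lemma has_real_derivative_pow_gamma:
  assumes "0 < s" "0 \<le> b"
  shows "((\<lambda>s. pow_gamma b s) has_real_derivative caputo_pow_gamma 1 b s) (at s)"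
proof (cases "b = 0")
  case False
  then have "(\<lambda>s. pow_gamma b s) = (\<lambda>s. s powr b / Gamma (1 + b))"
    by (simp add: pow_gamma_def tpow_def fun_eq_iff)
  moreover have "((\<lambda>s. s powr b / Gamma (1 + b))
      has_real_derivative b * s powr (b - 1) / Gamma (1 + b)) (at s)"
    using assms by (intro DERIV_cdivide has_real_derivative_powr)
  moreover have "b * s powr (b - 1) / Gamma (1 + b) = caputo_pow_gamma 1 b s"
    using caputo_pow_gamma_1[of s b] assms False by (simp add: pow_gamma_def tpow_def powr_diff)
  ultimately show ?thesis by simp
qed (simp add: caputo_pow_gamma_def)

lemma continuous_on_pow_gamma: "0 \<le> b \<Longrightarrow> continuous_on {0..} (pow_gamma b)"
proof (cases "b = 0")
  case False
  assume "0 \<le> b"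
  have "continuous_on {0..} (\<lambda>s. s powr b)"
    using \<open>0 \<le> b\<close> False by (intro continuous_on_powr' continuous_intros) auto
  then have "continuous_on {0..} (\<lambda>s. s powr b / Gamma (1 + b))"
    by (simp add: divide_inverse continuous_on_mult_right)
  moreover have "pow_gamma b = (\<lambda>s. s powr b / Gamma (1 + b))"
    using False by (simp add: pow_gamma_def tpow_def fun_eq_iff)
  ultimately show ?thesis by simp
qed (simp add: pow_gamma_def tpow_def)

lemma has_integral_caputo_pow_gamma:
  assumes t: "0 < t" and a: "0 < a" "a < 1" and b: "0 \<le> b"
  shows "((\<lambda>s. (t - s) powr (- a) * caputo_pow_gamma 1 b s)
           has_integral Gamma (1 - a) * caputo_pow_gamma a b t) {0..t}"
proof (cases "b = 0")
  case True
  then show ?thesis by (simp add: caputo_pow_gamma_def)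
next
  case False
  with b have b: "0 < b" by simp
  define f where "f u = u powr (b - 1) * (1 - u) powr ((1 - a) - 1)" for u :: real
  have beta: "(f has_integral Beta b (1 - a)) {0..1}"
    unfolding f_def using has_integral_Beta_real[of b "1 - a"] a b by simp
  have image: "(\<lambda>u. u * t) ` {0..1} = {0..t}"
  proof (intro equalityI image_subsetI subsetI)
    fix s assume "s \<in> {0..t}"
    then show "s \<in> (\<lambda>u. u * t) ` {0..1}"
      using t by (intro image_eqI[of _ _ "s / t"]) auto
  qed (use t in \<open>simp add: mult_le_cancel_right1\<close>)
  have stretched: "((\<lambda>s. f (s / t)) has_integral t * Beta b (1 - a)) {0..t}"
    using has_integral_stretch_real[OF beta, of "1 / t"] image t by simp
  define C where "C = t powr (b - 1 - a) / Gamma b"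
  have integrand: "C * f (s / t) = (t - s) powr (- a) * caputo_pow_gamma 1 b s"
    if "s \<in> {0..t}" for s
  proof -
    have "1 - s / t = (t - s) / t" using t by (simp add: field_simps)
    then have "f (s / t) = s powr (b - 1) / t powr (b - 1) * ((t - s) powr (- a) / t powr (- a))"
      unfolding f_def using that t by (simp add: powr_divide)
    moreover have "t powr (b - 1 - a) = t powr (b - 1) * t powr (- a)"
      by (simp flip: powr_add)
    ultimately show ?thesis
      unfolding C_def caputo_pow_gamma_def using b t by (simp add: field_simps)
  qed
  have "C * (t * Beta b (1 - a)) = Gamma (1 - a) * caputo_pow_gamma a b t"
  proof -
    have "t powr (b - 1 - a) * t = t powr (b - a)"
      using t powr_add[of t "b - 1 - a" 1] by simp
    moreover have "Gamma b \<noteq> 0" "Gamma (1 - a) \<noteq> 0" "Gamma (1 + b - a) \<noteq> 0"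
      using a b by (auto intro!: Gamma_real_pos[THEN less_imp_neq, symmetric])
    ultimately show ?thesis
      unfolding C_def caputo_pow_gamma_def Beta_def using b by (simp add: field_simps)
  qed
  then show ?thesis
    using has_integral_eq[OF integrand has_integral_mult_right[OF stretched, of C]] by simp
qed

definition theta_pow_sum :: "(nat \<Rightarrow> real) \<Rightarrow> nat \<Rightarrow> nat \<Rightarrow> real \<Rightarrow> real" where
  "theta_pow_sum \<alpha> n k t = (\<Sum>ks\<in>Theta k n. pow_gamma (exponent \<alpha> n ks) t)"

definition theta_caputo_sum :: "(nat \<Rightarrow> real) \<Rightarrow> real \<Rightarrow> nat \<Rightarrow> nat \<Rightarrow> real \<Rightarrow> real" where
  "theta_caputo_sum \<alpha> a n k t = (\<Sum>ks\<in>Theta k n. caputo_pow_gamma a (exponent \<alpha> n ks) t)"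

lemma sdfpp_term_eq: "sdfpp_term lam \<alpha> n t k = (- lam) ^ k * theta_pow_sum \<alpha> n k t"
  by (simp add: sdfpp_term_def theta_pow_sum_def pow_gamma_def exponent_def)

text \<open>The factor \<open>2 ^ (n + 2)\<close> absorbs both \<^term>\<open>card (Theta k n)\<close> and a linear factor
  in \<open>k\<close>.\<close>
lemma sum_Theta_le_geometric:
  fixes g :: "(nat \<Rightarrow> nat) \<Rightarrow> real"
  assumes "0 \<le> lam" "0 \<le> q" "lam * 2 ^ (n + 2) * q \<le> 1 / 2" "0 \<le> K"
    and "\<And>ks. ks \<in> Theta k n \<Longrightarrow> g ks \<le> K * (real k + 1) * q ^ k"
  shows "lam ^ k * (\<Sum>ks\<in>Theta k n. g ks) \<le> K * (1 / 2) ^ k"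
proof -
  have "card (Theta k n) * (k + 1) \<le> (k + 1) ^ (n + 1) * (k + 1)"
    using card_Theta_le by (rule mult_le_mono1)
  also have "\<dots> = (k + 1) ^ (n + 2)"
    by simp
  also have "\<dots> \<le> (2 ^ k) ^ (n + 2)"
    by (intro power_mono) (simp_all add: Suc_leI)
  also have "\<dots> = (2 ^ (n + 2)) ^ k"
    by (simp only: power_mult[symmetric] mult.commute)
  finally have card: "real (card (Theta k n)) * (k + 1) \<le> (2 ^ (n + 2)) ^ k"
    by (metis (mono_tags) of_nat_1 of_nat_add of_nat_le_iff of_nat_mult of_nat_numeral of_nat_power)
  have "(\<Sum>ks\<in>Theta k n. g ks) \<le> real (card (Theta k n)) * (K * (real k + 1) * q ^ k)"
    using sum_mono[of "Theta k n" g "\<lambda>_. K * (real k + 1) * q ^ k", OF assms(5)] by simp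
  also have "\<dots> \<le> K * ((2 ^ (n + 2)) ^ k * q ^ k)"
    using mult_right_mono[OF card, of "K * q ^ k"] assms by (simp add: mult_ac add.commute)
  finally have "lam ^ k * (\<Sum>ks\<in>Theta k n. g ks) \<le> K * (lam * 2 ^ (n + 2) * q) ^ k"
    using assms(1) mult_left_mono[of _ _ "lam ^ k"] by (fastforce simp: power_mult_distrib mult_ac)
  also have "\<dots> \<le> K * (1 / 2) ^ k"
    using assms by (intro mult_left_mono power_mono) auto
  finally show ?thesis .
qed

lemma theta_pow_sum_nonneg: "(\<And>j. 0 \<le> \<alpha> j) \<Longrightarrow> 0 \<le> theta_pow_sum \<alpha> n k t"
  unfolding theta_pow_sum_def by (intro sum_nonneg pow_gamma_nonneg exponent_nonneg)

lemma theta_caputo_sum_nonneg: "(\<And>j. 0 \<le> \<alpha> j) \<Longrightarrow> a \<le> 1 \<Longrightarrow> 0 \<le> theta_caputo_sum \<alpha> a n k t"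
  unfolding theta_caputo_sum_def by (intro sum_nonneg caputo_pow_gamma_nonneg exponent_nonneg)

lemma theta_caputo_sum_at_0 [simp]: "theta_caputo_sum \<alpha> a n k 0 = 0"
  by (simp add: theta_caputo_sum_def)

lemma theta_caputo_sum_0: "theta_caputo_sum \<alpha> a n 0 t = 0"
  by (simp add: theta_caputo_sum_def caputo_pow_gamma_def exponent_Theta_0)

lemma theta_pow_sum_at_0:
  assumes "\<And>j. 0 < \<alpha> j"
  shows "theta_pow_sum \<alpha> n k 0 = (if k = 0 \<and> n = 0 then 1 else 0)"
proof (cases k)
  case 0
  then show ?thesis
    by (cases "n = 0") (simp_all add: theta_pow_sum_def Theta_0_0 Theta_eq_empty exponent_Theta_0)
next
  case (Suc k')
  have "exponent \<alpha> n ks \<noteq> 0" if "ks \<in> Theta k n" for ks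
    using exponent_pos[of \<alpha>, OF assms] that Suc by fastforce
  then show ?thesis
    using Suc by (simp add: theta_pow_sum_def pow_gamma_at_0)
qed

lemma theta_caputo_sum_Suc:
  assumes "\<And>j. 0 < \<alpha> j" and "0 < t"
  shows "theta_caputo_sum \<alpha> (\<alpha> n) n (Suc k) t =
    theta_pow_sum \<alpha> n k t + (if n = 0 then 0 else theta_pow_sum \<alpha> (n - 1) k t)"
proof -
  let ?dec = "\<lambda>ks. ks(n := ks n - 1)"
  have "caputo_pow_gamma (\<alpha> n) (exponent \<alpha> n ks) t = pow_gamma (exponent \<alpha> n (?dec ks)) t"
    if "ks \<in> Theta (Suc k) n" for ks
  proof -
    have "exponent \<alpha> n ks \<noteq> 0"
      using exponent_pos[of \<alpha>, OF assms(1) that] by simp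
    moreover have "exponent \<alpha> n (?dec ks) = exponent \<alpha> n ks - \<alpha> n"
      using Theta_Suc_last_ge_1[OF that] by (simp add: exponent_fun_upd of_nat_diff algebra_simps)
    ultimately show ?thesis using assms(2) by (simp add: caputo_pow_gamma_eq_pow_gamma)
  qed
  then have "theta_caputo_sum \<alpha> (\<alpha> n) n (Suc k) t =
      (\<Sum>ks\<in>Theta (Suc k) n. pow_gamma (exponent \<alpha> n (?dec ks)) t)"
    unfolding theta_caputo_sum_def by (rule sum.cong[OF refl])
  also have "\<dots> = (\<Sum>ks\<in>Theta k n \<union> (if n = 0 then {} else Theta k (n - 1)).
      pow_gamma (exponent \<alpha> n ks) t)"
    using bij_betw_Theta_Suc by (rule sum.reindex_bij_betw)
  also have "\<dots> = theta_pow_sum \<alpha> n k t + (if n = 0 then 0 else theta_pow_sum \<alpha> (n - 1) k t)"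
  proof (cases n)
    case (Suc m)
    have "Theta k n \<inter> Theta k m = {}"
      using Suc by (auto simp: Theta_iff)
    then show ?thesis
      using Suc
      by (simp add: theta_pow_sum_def sum.union_disjoint finite_Theta exponent_Suc cong: sum.cong)
  qed (simp add: theta_pow_sum_def)
  finally show ?thesis .
qed

lemma has_real_derivative_theta_pow_sum:
  "(\<And>j. 0 \<le> \<alpha> j) \<Longrightarrow> 0 < s \<Longrightarrow>
     (theta_pow_sum \<alpha> n k has_real_derivative theta_caputo_sum \<alpha> 1 n k s) (at s)"
  unfolding theta_pow_sum_def[abs_def] theta_caputo_sum_def
  by (intro DERIV_sum has_real_derivative_pow_gamma exponent_nonneg)

lemma continuous_on_theta_pow_sum:
  "(\<And>j. 0 \<le> \<alpha> j) \<Longrightarrow> continuous_on {0..} (theta_pow_sum \<alpha> n k)"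
  unfolding theta_pow_sum_def[abs_def]
  by (intro continuous_on_sum continuous_on_pow_gamma exponent_nonneg)

lemma has_integral_caputo_theta_pow_sum:
  "(\<And>j. 0 \<le> \<alpha> j) \<Longrightarrow> 0 < t \<Longrightarrow> 0 < a \<Longrightarrow> a < 1 \<Longrightarrow>
     ((\<lambda>s. (t - s) powr (- a) * theta_caputo_sum \<alpha> 1 n k s)
        has_integral Gamma (1 - a) * theta_caputo_sum \<alpha> a n k t) {0..t}"
  unfolding theta_caputo_sum_def sum_distrib_left
  by (intro has_integral_sum finite_Theta has_integral_caputo_pow_gamma exponent_nonneg)

section \<open>Termwise integration and the Caputo derivative\<close>

lemma suminf_shift_zeros:
  fixes f :: "nat \<Rightarrow> 'a::real_normed_vector"
  assumes "\<And>i. i < n \<Longrightarrow> f i = 0"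
  shows "(\<Sum>k. f (k + n)) = suminf f"
proof -
  have "(\<Sum>i<n. f i) = 0"
    using assms by simp
  then have "(\<lambda>k. f (k + n)) sums s \<longleftrightarrow> f sums s" for s
    by (simp add: sums_iff_shift)
  then show ?thesis by (simp add: suminf_def)
qed

lemma has_integral_suminf_abs:
  fixes f :: "nat \<Rightarrow> 'a::euclidean_space \<Rightarrow> real"
  assumes f: "\<And>k. (f k has_integral I k) S"
    and abs_f: "\<And>k. ((\<lambda>x. \<bar>f k x\<bar>) has_integral J k) S"
    and J: "summable J"
    and pointwise: "\<And>x. x \<in> S \<Longrightarrow> summable (\<lambda>k. \<bar>f k x\<bar>)"
  shows "((\<lambda>x. \<Sum>k. f k x) has_integral (\<Sum>k. I k)) S"
proof -
  define G where "G x = (\<Sum>k. \<bar>f k x\<bar>)" for x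
  have J_nonneg: "0 \<le> J k" for k
    using abs_f by (rule has_integral_nonneg) simp
  have partial_abs: "((\<lambda>x. \<Sum>k<N. \<bar>f k x\<bar>) has_integral (\<Sum>k<N. J k)) S" for N
    by (intro has_integral_sum abs_f) simp
  have G: "G integrable_on S"
  proof (rule conjunct1[OF monotone_convergence_increasing])
    show "(\<lambda>x. \<Sum>k<N. \<bar>f k x\<bar>) integrable_on S" for N
      using partial_abs by blast
    show "(\<lambda>N. \<Sum>k<N. \<bar>f k x\<bar>) \<longlonglongrightarrow> G x" if "x \<in> S" for x
      unfolding G_def using pointwise[OF that] by (rule summable_LIMSEQ)
    have "\<bar>integral S (\<lambda>x. \<Sum>k<N. \<bar>f k x\<bar>)\<bar> \<le> suminf J" for N
      using J J_nonneg partial_abs[THEN integral_unique] by (simp add: sum_nonneg sum_le_suminf)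
    then show "bounded (range (\<lambda>N. integral S (\<lambda>x. \<Sum>k<N. \<bar>f k x\<bar>)))"
      unfolding bounded_iff by auto
  qed simp
  have partial: "(\<lambda>x. \<Sum>k<N. f k x) integrable_on S" for N
    using f by (intro integrable_sum) (auto simp: integrable_on_def)
  have dominated: "norm (\<Sum>k<N. f k x) \<le> G x" if "x \<in> S" for N x
    unfolding G_def real_norm_def using pointwise[OF that]
    by (intro order_trans[OF sum_abs] sum_le_suminf) auto
  have converges: "(\<lambda>N. \<Sum>k<N. f k x) \<longlonglongrightarrow> (\<Sum>k. f k x)" if "x \<in> S" for x
    using pointwise[OF that] by (rule summable_LIMSEQ[OF summable_rabs_cancel])
  note dominated_convergence[OF partial G dominated converges]
  moreover have "(\<lambda>N. integral S (\<lambda>x. \<Sum>k<N. f k x)) \<longlonglongrightarrow> (\<Sum>k. I k)"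
  proof -
    have abs_I: "\<bar>I k\<bar> \<le> J k" for k
    proof -
      have "I k \<le> J k" by (rule has_integral_le[OF f abs_f]) simp
      moreover have "- J k \<le> I k" by (rule has_integral_le[OF has_integral_neg[OF abs_f] f]) simp
      ultimately show ?thesis by simp
    qed
    have "summable I"
      using J by (rule summable_comparison_test') (simp add: abs_I)
    moreover have "integral S (\<lambda>x. \<Sum>k<N. f k x) = (\<Sum>k<N. I k)" for N
      by (intro integral_unique has_integral_sum f) simp
    ultimately show ?thesis by (simp add: summable_LIMSEQ)
  qed
  ultimately show ?thesis
    using LIMSEQ_unique has_integral_integrable_integral by metis
qed

lemma caputo_eqI:
  assumes "a \<le> 1" "0 < t"
    and derivative: "\<And>s. 0 < s \<Longrightarrow> s \<le> t \<Longrightarrow> (f has_real_derivative f' s) (at s)"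
    and ordinary: "a = 1 \<Longrightarrow> f' t = v"
    and fractional: "a < 1 \<Longrightarrow>
      ((\<lambda>s. (t - s) powr (- a) * f' s) has_integral Gamma (1 - a) * v) {0..t}"
  shows "caputo_defined a f t \<and> caputo a f t = v"
proof (cases "a = 1")
  case True
  have "(f has_real_derivative f' t) (at t)"
    using derivative assms(2) by simp
  then show ?thesis
    using True ordinary
    by (auto simp: caputo_defined_def caputo_def real_differentiable_def DERIV_imp_deriv)
next
  case False
  with assms(1) have "a < 1" by simp
  have "((\<lambda>s. (t - s) powr (- a) * deriv f s) has_integral Gamma (1 - a) * v) {0..t}"
  proof (rule has_integral_spike[OF negligible_sing _ fractional[OF \<open>a < 1\<close>]])
    fix s assume "s \<in> {0..t} - {0}"
    then have "deriv f s = f' s"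
      using derivative by (intro DERIV_imp_deriv) auto
    then show "(t - s) powr (- a) * deriv f s = (t - s) powr (- a) * f' s"
      by simp
  qed
  moreover have "\<forall>s\<in>{0<..<t}. f differentiable (at s)"
  proof
    fix s assume "s \<in> {0<..<t}"
    then show "f differentiable (at s)"
      using derivative[of s] unfolding real_differentiable_def by auto
  qed
  moreover have "0 < Gamma (1 - a)"
    using \<open>a < 1\<close> by (intro Gamma_real_pos) simp
  ultimately show ?thesis
    using False by (auto simp: caputo_defined_def caputo_def integral_unique)
qed

lemma abs_neg_power_mult:
  fixes lam x :: real
  assumes "0 \<le> lam" "0 \<le> x"
  shows "\<bar>(- lam) ^ k * x\<bar> = lam ^ k * x"
  using assms by (simp add: abs_mult power_abs)

lemma continuous_on_atLeast:
  fixes f :: "real \<Rightarrow> 'a::topological_space"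
  assumes "\<And>T. a < T \<Longrightarrow> continuous_on {a..T} f"
  shows "continuous_on {a..} f"
  unfolding continuous_on_def
proof
  fix x assume "x \<in> {a..}"
  then have "(f \<longlongrightarrow> f x) (at x within {a..x + 1})"
    using assms[of "x + 1"] by (auto simp: continuous_on_def)
  moreover have "at x within {a..} = at x within {a..x + 1}"
    by (rule at_within_nhd[where S = "{..<x + 1}"]) auto
  ultimately show "(f \<longlongrightarrow> f x) (at x within {a..})"
    by simp
qed

lemma summable_abs_if_geometric_bound:
  fixes f :: "nat \<Rightarrow> real"
  assumes "\<And>k. \<bar>f k\<bar> \<le> C * (1 / 2) ^ k"
  shows "summable (\<lambda>k. \<bar>f k\<bar>)"
  by (rule summable_comparison_test'[where g = "\<lambda>k. C * (1 / 2) ^ k"]) (simp_all add: assms)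

section \<open>The series solution\<close>

locale sdfpp_setting =
  fixes lam :: real and \<alpha> :: "nat \<Rightarrow> real"
  assumes lam_pos: "0 < lam"
    and alpha_pos: "\<And>j. 0 < \<alpha> j"
    and alpha_le_1: "\<And>j. \<alpha> j \<le> 1"
begin

lemma alpha_nonneg: "0 \<le> \<alpha> j"
  using alpha_pos less_imp_le by blast

lemma decay_radius:
  assumes "0 < T"
  obtains R q where "T \<le> R" and "0 \<le> q" and "lam * 2 ^ (n + 2) * q \<le> 1 / 2"
    and "\<And>k ks. ks \<in> Theta k n \<Longrightarrow> (T / R) powr exponent \<alpha> n ks \<le> q ^ k"
proof -
  define c where "c = Min (\<alpha> ` {..n})"
  have c: "0 < c" "\<And>j. j \<le> n \<Longrightarrow> c \<le> \<alpha> j"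
    unfolding c_def using alpha_pos by (auto simp: Min_gr_iff)
  define L where "L = lam * 2 ^ (n + 2)"
  define R where "R = T * (2 * L + 1) powr (1 / c)"
  have L: "0 < L" unfolding L_def using lam_pos by simp
  have "1 \<le> (2 * L + 1) powr (1 / c)"
    using L c by (intro ge_one_powr_ge_zero) auto
  then have "T \<le> R"
    unfolding R_def using assms by (simp add: mult_le_cancel_left1)
  then have TR: "T \<le> R" "0 < T / R" "T / R \<le> 1"
    using assms by auto
  define q where "q = (T / R) powr c"
  have q_eq: "q = 1 / (2 * L + 1)"
    unfolding q_def R_def using assms c L by (simp add: powr_divide powr_powr)
  have "(T / R) powr exponent \<alpha> n ks \<le> q ^ k" if "ks \<in> Theta k n" for k ks
  proof -
    have "(T / R) powr exponent \<alpha> n ks \<le> (T / R) powr (c * k)"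
      using TR exponent_ge[OF c(2) that] by (intro powr_mono') auto
    also have "\<dots> = q powr k"
      unfolding q_def by (simp add: powr_powr)
    also have "\<dots> = q ^ k"
      unfolding q_def using TR assms by (intro powr_realpow) simp
    finally show ?thesis .
  qed
  moreover have "0 \<le> q" "lam * 2 ^ (n + 2) * q \<le> 1 / 2"
    unfolding L_def[symmetric] q_eq using L by (simp_all add: field_simps)
  ultimately show ?thesis
    using that TR(1) by blast
qed

lemma theta_pow_sum_bound:
  assumes "0 < T"
  obtains C where "\<And>k t. 0 \<le> t \<Longrightarrow> t \<le> T \<Longrightarrow> lam ^ k * theta_pow_sum \<alpha> n k t \<le> C * (1 / 2) ^ k"
proof -
  obtain R q where R: "T \<le> R" and q: "0 \<le> q" "lam * 2 ^ (n + 2) * q \<le> 1 / 2"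
    and decay: "\<And>k ks. ks \<in> Theta k n \<Longrightarrow> (T / R) powr exponent \<alpha> n ks \<le> q ^ k"
    using decay_radius[OF assms] by blast
  have "lam ^ k * theta_pow_sum \<alpha> n k t \<le> exp (R + 1) * (1 / 2) ^ k" if "0 \<le> t" "t \<le> T" for k t
    unfolding theta_pow_sum_def
  proof (rule sum_Theta_le_geometric[OF _ q])
    fix ks assume ks: "ks \<in> Theta k n"
    have "pow_gamma (exponent \<alpha> n ks) t \<le> exp (R + 1) * (T / R) powr exponent \<alpha> n ks"
      using that assms R by (intro pow_gamma_le exponent_nonneg alpha_nonneg)
    also have "\<dots> \<le> exp (R + 1) * ((real k + 1) * q ^ k)"
      using decay[OF ks] mult_right_mono[of 1 "real k + 1" "q ^ k"] q(1)
      by (intro mult_left_mono) auto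
    also have "\<dots> = exp (R + 1) * (real k + 1) * q ^ k"
      by (simp add: mult_ac)
    finally show "pow_gamma (exponent \<alpha> n ks) t \<le> \<dots>" .
  qed (use lam_pos in simp_all)
  then show ?thesis by (rule that)
qed

lemma theta_caputo_sum_1_bound:
  assumes "0 < \<delta>" "\<delta> \<le> T"
  obtains C where "\<And>k s. \<delta> \<le> s \<Longrightarrow> s \<le> T \<Longrightarrow> lam ^ k * theta_caputo_sum \<alpha> 1 n k s \<le> C * (1 / 2) ^ k"
proof -
  obtain R q where R: "T \<le> R" and q: "0 \<le> q" "lam * 2 ^ (n + 2) * q \<le> 1 / 2"
    and decay: "\<And>k ks. ks \<in> Theta k n \<Longrightarrow> (T / R) powr exponent \<alpha> n ks \<le> q ^ k"
    using decay_radius assms by (metis order_less_le_trans)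
  have "lam ^ k * theta_caputo_sum \<alpha> 1 n k s \<le> exp (R + 1) / \<delta> * (1 / 2) ^ k"
    if s: "\<delta> \<le> s" "s \<le> T" for k s
    unfolding theta_caputo_sum_def
  proof (rule sum_Theta_le_geometric[OF _ q])
    fix ks assume ks: "ks \<in> Theta k n"
    define b where "b = exponent \<alpha> n ks"
    have b: "0 \<le> b" "b \<le> k"
      unfolding b_def using exponent_nonneg exponent_le alpha_nonneg alpha_le_1 ks by auto
    have "caputo_pow_gamma 1 b s \<le> (real k + 1) / \<delta> * (exp (R + 1) * (T / R) powr b)"
    proof (cases "b = 0")
      case False
      then have "caputo_pow_gamma 1 b s = b / s * pow_gamma b s"
        using b assms s by (intro caputo_pow_gamma_1) auto
      also have "\<dots> \<le> (real k + 1) / \<delta> * (exp (R + 1) * (T / R) powr b)"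
        using b assms s R
        by (intro mult_mono frac_le pow_gamma_le divide_nonneg_nonneg pow_gamma_nonneg) auto
      finally show ?thesis .
    qed (use assms in \<open>simp add: caputo_pow_gamma_def\<close>)
    also have "\<dots> \<le> (real k + 1) / \<delta> * (exp (R + 1) * q ^ k)"
      using decay[OF ks] assms unfolding b_def by (intro mult_left_mono) auto
    finally show "caputo_pow_gamma 1 b s \<le> exp (R + 1) / \<delta> * (real k + 1) * q ^ k"
      by (simp add: field_simps)
  qed (use assms lam_pos in simp_all)
  then show ?thesis by (rule that)
qed

lemma theta_caputo_sum_bound:
  assumes "0 < t"
  obtains C where "\<And>k. lam ^ k * theta_caputo_sum \<alpha> (\<alpha> n) n k t \<le> C * (1 / 2) ^ k"
proof -
  obtain R q where R: "t \<le> R" and q: "0 \<le> q" "lam * 2 ^ (n + 2) * q \<le> 1 / 2"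
    and decay: "\<And>k ks. ks \<in> Theta k n \<Longrightarrow> (t / R) powr exponent \<alpha> n ks \<le> q ^ k"
    using decay_radius[OF assms] by blast
  have tR: "0 < t / R" "t / R \<le> 1"
    using assms R by auto
  have "lam ^ k * theta_caputo_sum \<alpha> (\<alpha> n) n k t \<le> exp (R + 1) * (R / t) * (1 / 2) ^ k" for k
    unfolding theta_caputo_sum_def
  proof (rule sum_Theta_le_geometric[OF _ q])
    fix ks assume ks: "ks \<in> Theta k n"
    define b where "b = exponent \<alpha> n ks"
    have "caputo_pow_gamma (\<alpha> n) b t \<le> exp (R + 1) * (R / t) * (t / R) powr b"
    proof (cases k)
      case 0
      then show ?thesis
        using ks assms R by (simp add: b_def exponent_Theta_0 caputo_pow_gamma_def)
    next
      case (Suc k')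
      have b: "\<alpha> n \<le> b" "0 < b"
        unfolding b_def using ks Suc alpha_le_exponent[of \<alpha>] exponent_pos[of \<alpha>]
        by (auto simp: alpha_nonneg alpha_pos)
      have "caputo_pow_gamma (\<alpha> n) b t = pow_gamma (b - \<alpha> n) t"
        using assms b by (intro caputo_pow_gamma_eq_pow_gamma) auto
      also have "\<dots> \<le> exp (R + 1) * (t / R) powr (b - \<alpha> n)"
        using assms R b by (intro pow_gamma_le) auto
      also have "\<dots> = exp (R + 1) * ((t / R) powr b / (t / R) powr \<alpha> n)"
        by (simp add: powr_diff)
      also have "\<dots> \<le> exp (R + 1) * ((t / R) powr b / (t / R))"
      proof -
        have "(t / R) powr 1 \<le> (t / R) powr \<alpha> n"
          using tR alpha_le_1[of n] by (intro powr_mono') auto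
        then show ?thesis
          using tR assms R by (intro mult_left_mono divide_left_mono mult_pos_pos) auto
      qed
      finally show ?thesis
        using assms R by (simp add: field_simps)
    qed
    also have "\<dots> \<le> exp (R + 1) * (R / t) * ((real k + 1) * q ^ k)"
      using decay[OF ks] mult_right_mono[of 1 "real k + 1" "q ^ k"] q(1) assms R
      unfolding b_def by (intro mult_left_mono) auto
    also have "\<dots> = exp (R + 1) * (R / t) * (real k + 1) * q ^ k"
      by (simp add: mult_ac)
    finally show "caputo_pow_gamma (\<alpha> n) b t \<le> \<dots>" .
  qed (use assms R lam_pos in simp_all)
  then show ?thesis by (rule that)
qed

definition pow_series :: "nat \<Rightarrow> real \<Rightarrow> real" where
  "pow_series n t = (\<Sum>k. (- lam) ^ k * theta_pow_sum \<alpha> n k t)"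

definition caputo_series :: "real \<Rightarrow> nat \<Rightarrow> real \<Rightarrow> real" where
  "caputo_series a n t = (\<Sum>k. (- lam) ^ k * theta_caputo_sum \<alpha> a n k t)"

lemma abs_pow_term: "\<bar>(- lam) ^ k * theta_pow_sum \<alpha> n k t\<bar> = lam ^ k * theta_pow_sum \<alpha> n k t"
  using lam_pos by (intro abs_neg_power_mult theta_pow_sum_nonneg alpha_nonneg) simp

lemma abs_caputo_term: "a \<le> 1 \<Longrightarrow>
    \<bar>(- lam) ^ k * theta_caputo_sum \<alpha> a n k t\<bar> = lam ^ k * theta_caputo_sum \<alpha> a n k t"
  using lam_pos by (intro abs_neg_power_mult theta_caputo_sum_nonneg alpha_nonneg) simp

lemma summable_abs_pow_terms:
  assumes "0 \<le> t"
  shows "summable (\<lambda>k. \<bar>(- lam) ^ k * theta_pow_sum \<alpha> n k t\<bar>)"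
proof -
  obtain C where C: "\<And>k s. 0 \<le> s \<Longrightarrow> s \<le> t + 1 \<Longrightarrow> lam ^ k * theta_pow_sum \<alpha> n k s \<le> C * (1 / 2) ^ k"
    using theta_pow_sum_bound[of "t + 1" n] assms by auto
  have "\<bar>(- lam) ^ k * theta_pow_sum \<alpha> n k t\<bar> \<le> C * (1 / 2) ^ k" for k
    unfolding abs_pow_term using assms by (intro C) auto
  then show ?thesis by (rule summable_abs_if_geometric_bound)
qed

lemma summable_abs_caputo_1_terms:
  assumes "0 \<le> s"
  shows "summable (\<lambda>k. \<bar>(- lam) ^ k * theta_caputo_sum \<alpha> 1 n k s\<bar>)"
proof (cases "s = 0")
  case True
  then show ?thesis
    by (simp add: theta_caputo_sum_at_0)
next
  case False
  with assms obtain C where C: "\<And>k. lam ^ k * theta_caputo_sum \<alpha> 1 n k s \<le> C * (1 / 2) ^ k"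
    using theta_caputo_sum_1_bound[of s s n] by (metis order_le_less order_refl)
  have "\<bar>(- lam) ^ k * theta_caputo_sum \<alpha> 1 n k s\<bar> \<le> C * (1 / 2) ^ k" for k
    unfolding abs_caputo_term[OF order_refl] by (rule C)
  then show ?thesis by (rule summable_abs_if_geometric_bound)
qed

lemma summable_abs_caputo_terms:
  assumes "0 < t"
  shows "summable (\<lambda>k. \<bar>(- lam) ^ k * theta_caputo_sum \<alpha> (\<alpha> n) n k t\<bar>)"
proof -
  obtain C where C: "\<And>k. lam ^ k * theta_caputo_sum \<alpha> (\<alpha> n) n k t \<le> C * (1 / 2) ^ k"
    using theta_caputo_sum_bound[OF assms] by blast
  have "\<bar>(- lam) ^ k * theta_caputo_sum \<alpha> (\<alpha> n) n k t\<bar> \<le> C * (1 / 2) ^ k" for k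
    unfolding abs_caputo_term[OF alpha_le_1] by (rule C)
  then show ?thesis by (rule summable_abs_if_geometric_bound)
qed

lemma continuous_on_pow_series: "continuous_on {0..} (pow_series n)"
  unfolding pow_series_def[abs_def]
proof (rule continuous_on_atLeast)
  fix T :: real assume "0 < T"
  then obtain C where C: "\<And>k t. 0 \<le> t \<Longrightarrow> t \<le> T \<Longrightarrow> lam ^ k * theta_pow_sum \<alpha> n k t \<le> C * (1 / 2) ^ k"
    using theta_pow_sum_bound by blast
  show "continuous_on {0..T} (\<lambda>t. \<Sum>k. (- lam) ^ k * theta_pow_sum \<alpha> n k t)"
  proof (rule uniform_limit_theorem)
    show "uniform_limit {0..T} (\<lambda>N t. \<Sum>k<N. (- lam) ^ k * theta_pow_sum \<alpha> n k t)
        (\<lambda>t. \<Sum>k. (- lam) ^ k * theta_pow_sum \<alpha> n k t) sequentially"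
      by (rule Weierstrass_m_test[where M = "\<lambda>k. C * (1 / 2) ^ k"]) (simp_all add: abs_pow_term C)
    show "\<forall>\<^sub>F N in sequentially.
        continuous_on {0..T} (\<lambda>t. \<Sum>k<N. (- lam) ^ k * theta_pow_sum \<alpha> n k t)"
    proof (intro always_eventually allI continuous_intros)
      show "continuous_on {0..T} (theta_pow_sum \<alpha> n k)" for k
        using continuous_on_theta_pow_sum[of \<alpha>, OF alpha_nonneg] by (rule continuous_on_subset) auto
    qed
  qed simp
qed

lemma has_real_derivative_pow_series:
  assumes "0 < t"
  shows "(pow_series n has_real_derivative caputo_series 1 n t) (at t)"
proof -
  let ?S = "{t / 2..t + 1}"
  obtain C where C: "\<And>k s. t / 2 \<le> s \<Longrightarrow> s \<le> t + 1 \<Longrightarrow>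
      lam ^ k * theta_caputo_sum \<alpha> 1 n k s \<le> C * (1 / 2) ^ k"
    using theta_caputo_sum_1_bound[of "t / 2" "t + 1" n] assms by auto
  have "((\<lambda>s. \<Sum>k. (- lam) ^ k * theta_pow_sum \<alpha> n k s) has_real_derivative
      (\<Sum>k. (- lam) ^ k * theta_caputo_sum \<alpha> 1 n k t)) (at t)"
  proof (rule has_field_derivative_series'(2)[where S = ?S and x0 = t])
    show "((\<lambda>s. (- lam) ^ k * theta_pow_sum \<alpha> n k s) has_real_derivative
        (- lam) ^ k * theta_caputo_sum \<alpha> 1 n k s) (at s within ?S)" if "s \<in> ?S" for k s
      using that assms
      by (intro DERIV_cmult DERIV_subset[OF has_real_derivative_theta_pow_sum] alpha_nonneg) auto
    show "uniformly_convergent_on ?S (\<lambda>N s. \<Sum>k<N. (- lam) ^ k * theta_caputo_sum \<alpha> 1 n k s)"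
      by (rule Weierstrass_m_test'[where M = "\<lambda>k. C * (1 / 2) ^ k"])
        (simp_all add: abs_caputo_term[OF order_refl] C)
    show "summable (\<lambda>k. (- lam) ^ k * theta_pow_sum \<alpha> n k t)"
      using assms by (intro summable_rabs_cancel[OF summable_abs_pow_terms]) simp
  qed (use assms in auto)
  then show ?thesis
    unfolding pow_series_def[abs_def] caputo_series_def .
qed

lemma has_integral_caputo_series:
  assumes t: "0 < t" and a: "\<alpha> n < 1"
  shows "((\<lambda>s. (t - s) powr (- \<alpha> n) * caputo_series 1 n s)
           has_integral Gamma (1 - \<alpha> n) * caputo_series (\<alpha> n) n t) {0..t}"
proof -
  define a where "a = \<alpha> n"
  have a_bounds: "0 < a" "a < 1"
    unfolding a_def using alpha_pos a by auto
  define f where "f k s = (- lam) ^ k * ((t - s) powr (- a) * theta_caputo_sum \<alpha> 1 n k s)" for k s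
  have theta_integral: "((\<lambda>s. (t - s) powr (- a) * theta_caputo_sum \<alpha> 1 n k s)
      has_integral Gamma (1 - a) * theta_caputo_sum \<alpha> a n k t) {0..t}" for k
    using t a_bounds by (intro has_integral_caputo_theta_pow_sum alpha_nonneg)
  have series: "((\<lambda>s. \<Sum>k. f k s)
      has_integral (\<Sum>k. (- lam) ^ k * (Gamma (1 - a) * theta_caputo_sum \<alpha> a n k t))) {0..t}"
  proof (rule has_integral_suminf_abs)
    show "(f k has_integral (- lam) ^ k * (Gamma (1 - a) * theta_caputo_sum \<alpha> a n k t)) {0..t}"
      for k
      unfolding f_def by (rule has_integral_mult_right[OF theta_integral])
    have abs_f: "\<bar>f k s\<bar> = lam ^ k * ((t - s) powr (- a) * theta_caputo_sum \<alpha> 1 n k s)" for k s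
      unfolding f_def abs_mult[of "(t - s) powr (- a)"] mult.left_commute[of "(- lam) ^ k"]
      by (simp add: abs_caputo_term[OF order_refl])
    then show "((\<lambda>s. \<bar>f k s\<bar>)
        has_integral lam ^ k * (Gamma (1 - a) * theta_caputo_sum \<alpha> a n k t)) {0..t}" for k
      using has_integral_mult_right[OF theta_integral, of "lam ^ k"] by simp
    show "summable (\<lambda>k. lam ^ k * (Gamma (1 - a) * theta_caputo_sum \<alpha> a n k t))"
      using summable_mult[OF summable_abs_caputo_terms[OF t], of "Gamma (1 - a)" n]
      by (simp add: a_def abs_caputo_term alpha_le_1 mult_ac)
    show "summable (\<lambda>k. \<bar>f k s\<bar>)" if "s \<in> {0..t}" for s
    proof -
      have "summable (\<lambda>k. lam ^ k * theta_caputo_sum \<alpha> 1 n k s)"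
        using summable_abs_caputo_1_terms[of s n] that
        unfolding abs_caputo_term[OF order_refl] by simp
      from summable_mult[OF this, of "(t - s) powr (- a)"] show ?thesis
        unfolding abs_f by (simp add: mult.left_commute)
    qed
  qed
  have "(\<Sum>k. f k s) = (t - s) powr (- a) * caputo_series 1 n s" if "s \<in> {0..t}" for s
    unfolding f_def caputo_series_def mult.left_commute[of "(- lam) ^ _"] using that
    by (intro suminf_mult summable_rabs_cancel[OF summable_abs_caputo_1_terms]) simp
  moreover have "(\<Sum>k. (- lam) ^ k * (Gamma (1 - a) * theta_caputo_sum \<alpha> a n k t)) =
      Gamma (1 - a) * caputo_series a n t"
    unfolding caputo_series_def a_def mult.left_commute[of "(- lam) ^ _"]
    by (intro suminf_mult summable_rabs_cancel[OF summable_abs_caputo_terms] t)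
  ultimately show ?thesis
    using has_integral_eq[of "{0..t}", OF _ series] unfolding a_def by simp
qed

lemma caputo_series_recursion:
  assumes "0 < t"
  shows "caputo_series (\<alpha> n) n t =
    - lam * (pow_series n t + (if n = 0 then 0 else pow_series (n - 1) t))"
proof -
  have pow_sums: "(\<lambda>k. (- lam) ^ k * theta_pow_sum \<alpha> m k t) sums pow_series m t" for m
    unfolding pow_series_def using assms
    by (intro summable_sums summable_rabs_cancel[OF summable_abs_pow_terms]) simp
  have "(\<lambda>k. (- lam) ^ k * (theta_pow_sum \<alpha> n k t +
      (if n = 0 then 0 else theta_pow_sum \<alpha> (n - 1) k t))) sums
      (pow_series n t + (if n = 0 then 0 else pow_series (n - 1) t))"
    using pow_sums by (cases "n = 0") (auto simp: distrib_left intro: sums_add)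
  from sums_mult[OF this, of "- lam"]
  have "(\<lambda>k. (- lam) ^ Suc k * theta_caputo_sum \<alpha> (\<alpha> n) n (Suc k) t) sums
      (- lam * (pow_series n t + (if n = 0 then 0 else pow_series (n - 1) t)))"
    by (simp only: theta_caputo_sum_Suc[of \<alpha>, OF alpha_pos assms] power_Suc mult.assoc)
  then have "(\<lambda>k. (- lam) ^ k * theta_caputo_sum \<alpha> (\<alpha> n) n k t) sums
      (- lam * (pow_series n t + (if n = 0 then 0 else pow_series (n - 1) t)) +
       (- lam) ^ 0 * theta_caputo_sum \<alpha> (\<alpha> n) n 0 t)"
    by (subst sums_Suc_iff[symmetric])
  then have "(\<lambda>k. (- lam) ^ k * theta_caputo_sum \<alpha> (\<alpha> n) n k t) sums
      (- lam * (pow_series n t + (if n = 0 then 0 else pow_series (n - 1) t)))"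
    by (simp only: theta_caputo_sum_0 mult_zero_right add_0_right)
  then show ?thesis
    unfolding caputo_series_def by (rule sums_unique[symmetric])
qed

lemma pow_series_at_0: "pow_series n 0 = (if n = 0 then 1 else 0)"
proof -
  have "(\<lambda>k. (- lam) ^ k * theta_pow_sum \<alpha> n k 0) =
      (\<lambda>k. if k = 0 then (if n = 0 then 1 else 0) else 0)"
    by (simp add: theta_pow_sum_at_0[OF alpha_pos] fun_eq_iff)
  then have "(\<lambda>k. (- lam) ^ k * theta_pow_sum \<alpha> n k 0) sums (if n = 0 then 1 else 0)"
    using sums_single[of 0 "\<lambda>_. if n = 0 then 1 else 0 :: real"] by simp
  then show ?thesis
    unfolding pow_series_def by (rule sums_unique[symmetric])
qed

lemma sdfpp_eq_pow_series: "sdfpp lam \<alpha> n t = (- 1) ^ n * pow_series n t"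
proof -
  have "(\<Sum>k. sdfpp_term lam \<alpha> n t (k + n)) = pow_series n t"
    unfolding pow_series_def sdfpp_term_eq
    by (rule suminf_shift_zeros) (simp add: theta_pow_sum_def Theta_eq_empty)
  then show ?thesis
    by (simp add: sdfpp_def)
qed

lemma caputo_sdfpp:
  assumes "0 < t"
  shows "caputo_defined (\<alpha> n) (sdfpp lam \<alpha> n) t \<and>
    caputo (\<alpha> n) (sdfpp lam \<alpha> n) t =
      - lam * (sdfpp lam \<alpha> n t - (if n = 0 then 0 else sdfpp lam \<alpha> (n - 1) t))"
proof -
  have "caputo_defined (\<alpha> n) (sdfpp lam \<alpha> n) t \<and>
      caputo (\<alpha> n) (sdfpp lam \<alpha> n) t = (- 1) ^ n * caputo_series (\<alpha> n) n t"
  proof (rule caputo_eqI[OF alpha_le_1 assms])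
    show "(sdfpp lam \<alpha> n has_real_derivative (- 1) ^ n * caputo_series 1 n s) (at s)"
      if "0 < s" for s
      unfolding sdfpp_eq_pow_series[abs_def] using that
      by (intro DERIV_cmult has_real_derivative_pow_series)
    show "((\<lambda>s. (t - s) powr - \<alpha> n * ((- 1) ^ n * caputo_series 1 n s))
        has_integral Gamma (1 - \<alpha> n) * ((- 1) ^ n * caputo_series (\<alpha> n) n t)) {0..t}"
      if "\<alpha> n < 1"
      using has_integral_mult_right[OF has_integral_caputo_series[OF assms that], of "(- 1) ^ n"]
      by (simp add: mult_ac)
  qed simp
  then show ?thesis
    using caputo_series_recursion[OF assms]
    by (cases n) (simp_all add: sdfpp_eq_pow_series algebra_simps)
qed

end

theorem theorem3p2:
  fixes lam :: real and \<alpha> :: "nat \<Rightarrow> real"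
  assumes "lam > 0"
    and "\<And>n. 0 < \<alpha> n \<and> \<alpha> n \<le> 1"
  defines "p \<equiv> sdfpp lam \<alpha>"
  shows "(\<forall>n t. t \<ge> 0 \<longrightarrow> summable (\<lambda>k. sdfpp_term lam \<alpha> n t (k + n)))
    \<and> (\<forall>n. continuous_on {0..} (p n))
    \<and> p 0 0 = 1 \<and> (\<forall>n\<ge>1. p n 0 = 0)
    \<and> (\<forall>n t. t > 0 \<longrightarrow> caputo_defined (\<alpha> n) (p n) t \<and>
          caputo (\<alpha> n) (p n) t = - lam * (p n t - (if n = 0 then 0 else p (n - 1) t)))"
proof -
  interpret sdfpp_setting lam \<alpha>
    using assms(1,2) by unfold_locales auto
  have p_eq: "p n = (\<lambda>t. (- 1) ^ n * pow_series n t)" for n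
    unfolding p_def using sdfpp_eq_pow_series by auto
  have "summable (sdfpp_term lam \<alpha> n t)" if "0 \<le> t" for n t
    unfolding sdfpp_term_eq[abs_def] using summable_abs_pow_terms[OF that]
    by (rule summable_rabs_cancel)
  then have "summable (\<lambda>k. sdfpp_term lam \<alpha> n t (k + n))" if "0 \<le> t" for n t
    using that by (subst summable_iff_shift)
  moreover have "continuous_on {0..} (p n)" for n
    unfolding p_eq by (intro continuous_intros continuous_on_pow_series)
  moreover have "p n 0 = (if n = 0 then 1 else 0)" for n
    by (simp add: p_eq pow_series_at_0)
  moreover have "caputo_defined (\<alpha> n) (p n) t \<and>
      caputo (\<alpha> n) (p n) t = - lam * (p n t - (if n = 0 then 0 else p (n - 1) t))"
    if "0 < t" for n t
    unfolding p_def using caputo_sdfpp[OF that] .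
  ultimately show ?thesis
    by auto
qed

end
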